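(* Let $U$ be a countably infinite universe and $\mathcal{C}=(L_1,L_2,\ldots)$ a countably infinite collection of languages over $U$, and let $m^\star(L_j)$ be the values computed by the Procedure described in the context. Suppose that for every $t\in\mathbb{N}$, the set $\{j: m^\star(L_j)+1\le t\}$ is finite. Then there exists an algorithm that non-uniformly generates from $\mathcal{C}$ with generation times forming a Pareto-optimal sequence.
   Context: A language is an infinite subset of $U$. A collection is a sequence of languages; repetitions are allowed and entries are distinguished by their index. An enumeration of a language $L$ is a sequence $x_1,x_2,\ldots$ with every $x_t\in L$ and every $x\in L$ equal to some $x_t$. A generating algorithm at each time $t\ge1$ receives $x_1,\ldots,x_t$ and outputs $z_t\in U$; $S_t$ is the set of distinct strings among $x_1,\ldots,x_t$. An algorithm non-uniformly generates from $\mathcal{C}$ with (finite) generation times $t(L_i)$ if for every $i$ and every enumeration of $L_i$, $z_t\in L_i\setminus S_t$ whenever $|S_t|\ge t(L_i)$. For an algorithm $\mathcal{G}$, $t_{\mathcal{G}}(L_i)$ denotes the least such value for $L_i$ ($\infty$ if none). A sequence $t(L_1),t(L_2),\ldots$ is Pareto-optimal if every algorithm $\mathcal{G}$ that non-uniformly generates from $\mathcal{C}$ and satisfies $t_{\mathcal{G}}(L_i)<t(L_i)$ for some $i$ also satisfies $t_{\mathcal{G}}(L_j)>t(L_j)$ for some other $j$. Procedure. Set $\mathcal{C}'_0=()$. For $i=1,2,3,\ldots$: append the entry $L_i$ at the end of $\mathcal{C}'_{i-1}$ to get $\mathcal{C}'_i=(L'_1,\ldots,L'_i)$, and set $j=i$.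 Repeat: (1) among all subcollections $\mathcal{D}$ of the entries $(L'_1,\ldots,L'_j)$ that include the entry $L'_j$ and satisfy $|\bigcap_{L\in\mathcal{D}}L|<\infty$, let $m_{\mathrm{chk}}$ be the maximum of $|\bigcap_{L\in\mathcal{D}}L|$ and $\mathcal{C}_{\mathrm{chk}}$ a maximizer; if no such $\mathcal{D}$ exists, set $\mathcal{C}_{\mathrm{chk}}=()$, $m_{\mathrm{chk}}=0$. (2) If $j\le1$ or $m_{\mathrm{chk}}>m^\star(L'_{j-1})$ (already fixed since $L'_{j-1}$ has original index $<i$), stop the loop. (3) Otherwise swap positions $j-1$ and $j$ in $\mathcal{C}'_i$, set $j\leftarrow j-1$ and return to (1). When the loop stops, set $\mathcal{C}(L_i)=\mathcal{C}_{\mathrm{chk}}$ and $m^\star(L_i)=m_{\mathrm{chk}}$. *)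

theory Defs
  imports Main "HOL-Library.Countable_Set" "HOL-Library.Extended_Nat"
begin

(* Indices are 0-based: the collection is L 0, L 1, ...; an enumeration is x 0, x 1, ...;
   at time t >= 1 the algorithm sees the prefix [x 0, ..., x (t-1)]. *)

type_synonym 'u algorithm = "'u list \<Rightarrow> 'u"

definition enumerates :: "(nat \<Rightarrow> 'u) \<Rightarrow> 'u set \<Rightarrow> bool" where
  "enumerates x K \<longleftrightarrow> range x = K"

definition seen :: "(nat \<Rightarrow> 'u) \<Rightarrow> nat \<Rightarrow> 'u set" where
  "seen x t = x ` {..<t}"

definition gen_good :: "'u algorithm \<Rightarrow> 'u set \<Rightarrow> nat \<Rightarrow> bool" where
  "gen_good G K n \<longleftrightarrow>
     (\<forall>x. enumerates x K \<longrightarrow>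
        (\<forall>t\<ge>1. n \<le> card (seen x t) \<longrightarrow> G (map x [0..<t]) \<in> K - seen x t))"

definition nonunif_generates_with :: "'u algorithm \<Rightarrow> (nat \<Rightarrow> 'u set) \<Rightarrow> (nat \<Rightarrow> nat) \<Rightarrow> bool" where
  "nonunif_generates_with G L T \<longleftrightarrow> (\<forall>i. gen_good G (L i) (T i))"

definition nonunif_generates :: "'u algorithm \<Rightarrow> (nat \<Rightarrow> 'u set) \<Rightarrow> bool" where
  "nonunif_generates G L \<longleftrightarrow> (\<exists>T. nonunif_generates_with G L T)"

definition gen_time :: "'u algorithm \<Rightarrow> (nat \<Rightarrow> 'u set) \<Rightarrow> nat \<Rightarrow> enat" where
  "gen_time G L i = (if \<exists>n. gen_good G (L i) n then enat (LEAST n. gen_good G (L i) n) else \<infinity>)"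

definition pareto_optimal :: "(nat \<Rightarrow> 'u set) \<Rightarrow> (nat \<Rightarrow> nat) \<Rightarrow> bool" where
  "pareto_optimal L T \<longleftrightarrow>
     (\<forall>G::'u algorithm. nonunif_generates G L \<longrightarrow>
        (\<forall>i. gen_time G L i < enat (T i) \<longrightarrow> (\<exists>j. j \<noteq> i \<and> gen_time G L j > enat (T j))))"

(* m_chk for the entry at 0-based position p of the current ordering ord (list of original
   indices): max of |intersection of D| over finite-intersection subcollections D of the entries at
   positions 0..p that contain the entry at position p; 0 if there is none. *)
definition mchk :: "(nat \<Rightarrow> 'u set) \<Rightarrow> nat list \<Rightarrow> nat \<Rightarrow> nat" where
  "mchk L ord p = Max (insert 0
     {card (\<Inter>k\<in>D. L k) | D. D \<subseteq> set (take (Suc p) ord) \<and> ord ! p \<in> D \<and> finite (\<Inter>k\<in>D. L k)})"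

definition swap_adj :: "nat list \<Rightarrow> nat \<Rightarrow> nat list" where
  "swap_adj ord p = ord[p := ord ! Suc p, Suc p := ord ! p]"

fun ins_loop :: "(nat \<Rightarrow> 'u set) \<Rightarrow> (nat \<Rightarrow> nat) \<Rightarrow> nat list \<Rightarrow> nat \<Rightarrow> nat list \<times> nat" where
  "ins_loop L ms ord 0 = (ord, mchk L ord 0)"
| "ins_loop L ms ord (Suc p) =
     (let m = mchk L ord (Suc p) in
      if m > ms (ord ! p) then (ord, m) else ins_loop L ms (swap_adj ord p) p)"

(* state after processing indices 0..i-1: (ordering C'_i, m* values of processed indices) *)
fun proc :: "(nat \<Rightarrow> 'u set) \<Rightarrow> nat \<Rightarrow> nat list \<times> (nat \<Rightarrow> nat)" where
  "proc L 0 = ([], (\<lambda>_. 0))"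
| "proc L (Suc i) =
     (let (ord, ms) = proc L i;
          (ord', m) = ins_loop L ms (ord @ [i]) (length ord)
      in (ord', ms(i := m)))"

definition mstar :: "(nat \<Rightarrow> 'u set) \<Rightarrow> nat \<Rightarrow> nat" where
  "mstar L i = snd (proc L (Suc i)) i"

end

theory Submission
  imports Defs
begin

(* The Procedure guarantees two properties of m*.  Covering: every nonempty finite subcollection
   with finite intersection has a member L_j with m*(L_j) at least the size of the intersection.
   Tightness: if m*(L_i) > 0, some subcollection containing L_i has an intersection of exactly
   m*(L_i) strings, and all its other members have smaller m*.
   Put T(L_i) = m*(L_i) + 1 (or 0 when m*(L_i) = 0).  Having seen a set S, the algorithm outputs a
   fresh string of the intersection of all languages L_j that contain S and have m*(L_j) < |S|;
   by hypothesis there are finitely many of them, and by covering their intersection is infinite.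
   Conversely, an algorithm that generates for L_i before time T(L_i) must, when fed the tight
   intersection of L_i, output a string outside some other member L_j, so it is late for L_j. *)

section \<open>Generation times\<close>

lemma gen_good_mono: "gen_good G K n \<Longrightarrow> n \<le> n' \<Longrightarrow> gen_good G K n'"
  unfolding gen_good_def using le_trans by blast

lemma gen_time_le_iff: "gen_time G L i \<le> enat n \<longleftrightarrow> gen_good G (L i) n"
proof (cases "\<exists>n. gen_good G (L i) n")
  case True
  define n0 where "n0 = (LEAST n. gen_good G (L i) n)"
  have "gen_time G L i = enat n0" using True by (simp add: gen_time_def n0_def)
  moreover have "gen_good G (L i) n0" using True unfolding n0_def by (rule LeastI_ex)
  moreover have "gen_good G (L i) n \<Longrightarrow> n0 \<le> n" unfolding n0_def by (rule Least_le)
  ultimately show ?thesis using gen_good_mono by auto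
qed (simp add: gen_time_def)

lemma card_seen_pos: "1 \<le> t \<Longrightarrow> 1 \<le> card (seen x t)"
  unfolding seen_def by (auto simp: Suc_le_eq card_gt_0_iff)

lemma gen_good_Suc_0_imp_0: "gen_good G K (Suc 0) \<Longrightarrow> gen_good G K 0"
  using card_seen_pos unfolding gen_good_def One_nat_def by blast

lemma enumeration_with_prefix:
  assumes "countable K" "infinite K" "set w \<subseteq> K"
  obtains x where "enumerates x K" "map x [0..<length w] = w"
proof
  define x where "x n = (if n < length w then w ! n else from_nat_into K (n - length w))" for n
  have "K \<noteq> {}" using assms(2) by auto
  have "x n \<in> K" for n
    using assms(3) from_nat_into[OF \<open>K \<noteq> {}\<close>] by (cases "n < length w") (auto simp: x_def)
  then have "range x \<subseteq> K" by auto
  moreover have "y \<in> range x" if "y \<in> K" for y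
  proof -
    have "x (length w + to_nat_on K y) = y"
      by (simp add: x_def from_nat_into_to_nat_on[OF assms(1) that])
    then show ?thesis by (metis rangeI)
  qed
  ultimately show "enumerates x K" by (auto simp: enumerates_def)
  show "map x [0..<length w] = w" by (rule nth_equalityI) (auto simp: x_def)
qed

lemma not_gen_good_on_finite_Inter:
  assumes "\<And>j. j \<in> D \<Longrightarrow> countable (L j)" "\<And>j. j \<in> D \<Longrightarrow> infinite (L j)"
    and "D \<noteq> {}" "finite (\<Inter>j\<in>D. L j)" "0 < card (\<Inter>j\<in>D. L j)"
  shows "\<exists>j\<in>D. \<not> gen_good G (L j) (card (\<Inter>j\<in>D. L j))"
proof (rule ccontr)
  define E where "E = (\<Inter>j\<in>D. L j)"
  have "finite E" using assms(4) by (simp add: E_def)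
  then obtain w where w: "set w = E" "distinct w" using finite_distinct_list by blast
  have len: "length w = card E" using distinct_card[OF w(2)] w(1) by simp
  assume "\<not> (\<exists>j\<in>D. \<not> gen_good G (L j) (card (\<Inter>j\<in>D. L j)))"
  then have good: "gen_good G (L j) (length w)" if "j \<in> D" for j
    using that len E_def by simp
  have "G w \<in> L j - E" if j: "j \<in> D" for j
  proof -
    have "set w \<subseteq> L j" using w(1) j unfolding E_def by blast
    then obtain x where x: "enumerates x (L j)" "map x [0..<length w] = w"
      by (rule enumeration_with_prefix[OF assms(1)[OF j] assms(2)[OF j]])
    have "seen x (length w) = set (map x [0..<length w])" by (auto simp: seen_def)
    then have seen_w: "seen x (length w) = E" using x(2) w(1) by simp
    have "1 \<le> length w" using assms(5) len E_def by simp
    moreover have "length w \<le> card (seen x (length w))" using seen_w len by simp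
    ultimately have "G (map x [0..<length w]) \<in> L j - seen x (length w)"
      using good[OF j] x(1) unfolding gen_good_def by blast
    then show ?thesis using x(2) seen_w by simp
  qed
  then have "G w \<in> E" "G w \<notin> E" using \<open>D \<noteq> {}\<close> by (auto simp: E_def)
  then show False by simp
qed

lemma pareto_optimal_if_tight:
  fixes L :: "nat \<Rightarrow> 'u set"
  assumes "\<And>i. countable (L i)" "\<And>i. infinite (L i)"
    and tight: "\<And>i. T i \<noteq> 0 \<Longrightarrow> \<exists>D. i \<in> D \<and> finite (\<Inter>j\<in>D. L j) \<and> 0 < card (\<Inter>j\<in>D. L j)
                  \<and> T i = Suc (card (\<Inter>j\<in>D. L j)) \<and> (\<forall>j\<in>D - {i}. T j \<le> card (\<Inter>j\<in>D. L j))"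
  shows "pareto_optimal L T"
  unfolding pareto_optimal_def
proof (intro allI impI)
  fix G :: "'u algorithm" and i
  assume early: "gen_time G L i < enat (T i)"
  then have "T i \<noteq> 0" by (intro notI) (simp add: enat_0 not_iless0)
  from tight[OF this] obtain D where D: "i \<in> D" "finite (\<Inter>j\<in>D. L j)" "0 < card (\<Inter>j\<in>D. L j)"
    "T i = Suc (card (\<Inter>j\<in>D. L j))" "\<forall>j\<in>D - {i}. T j \<le> card (\<Inter>j\<in>D. L j)"
    by blast
  define m where "m = card (\<Inter>j\<in>D. L j)"
  have "\<not> enat (Suc m) \<le> gen_time G L i" using early D(4) m_def by simp
  then have good_i: "gen_good G (L i) m" by (simp add: Suc_ile_eq not_less gen_time_le_iff)
  obtain j where j: "j \<in> D" "\<not> gen_good G (L j) m"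
    using not_gen_good_on_finite_Inter[OF assms(1,2) _ D(2,3)] D(1) m_def by blast
  have "j \<noteq> i" using good_i j(2) by blast
  have "enat (T j) \<le> enat m" using D(5) j(1) \<open>j \<noteq> i\<close> m_def by simp
  also have "enat m < gen_time G L j" using j(2) by (simp add: gen_time_le_iff flip: not_le)
  finally have "enat (T j) < gen_time G L j" .
  with \<open>j \<noteq> i\<close> show "\<exists>j. j \<noteq> i \<and> enat (T j) < gen_time G L j" by blast
qed

definition threshold_generator :: "(nat \<Rightarrow> 'u set) \<Rightarrow> (nat \<Rightarrow> nat) \<Rightarrow> 'u algorithm" where
  "threshold_generator L m xs =
     (SOME z. z \<in> (\<Inter>j\<in>{j. m j < card (set xs) \<and> set xs \<subseteq> L j}. L j) - set xs)"

lemma gen_good_threshold_generator: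
  assumes fin: "\<And>t. finite {j. m j < t}"
    and covers: "\<And>D. finite D \<Longrightarrow> D \<noteq> {} \<Longrightarrow> finite (\<Inter>j\<in>D. L j) \<Longrightarrow>
                   \<exists>j\<in>D. card (\<Inter>j\<in>D. L j) \<le> m j"
  shows "gen_good (threshold_generator L m) (L i) (Suc (m i))"
  unfolding gen_good_def
proof (intro allI impI)
  fix x t assume enum: "enumerates x (L i)" and "1 \<le> t" and late: "Suc (m i) \<le> card (seen x t)"
  define S where "S = seen x t"
  have set_prefix: "set (map x [0..<t]) = S" by (auto simp: S_def seen_def)
  have "finite S" by (simp add: S_def seen_def)
  define C where "C = {j. m j < card S \<and> S \<subseteq> L j}"
  have "i \<in> C" using late enum by (auto simp: C_def S_def seen_def enumerates_def)
  have "infinite (\<Inter>j\<in>C. L j)"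
  proof
    assume fin_Inter: "finite (\<Inter>j\<in>C. L j)"
    have "finite C" by (rule finite_subset[OF _ fin[of "card S"]]) (auto simp: C_def)
    with covers fin_Inter \<open>i \<in> C\<close> obtain j where j: "j \<in> C" "card (\<Inter>j\<in>C. L j) \<le> m j"
      by blast
    have "card S \<le> card (\<Inter>j\<in>C. L j)" by (rule card_mono[OF fin_Inter]) (auto simp: C_def)
    then show False using j by (auto simp: C_def)
  qed
  then have "infinite ((\<Inter>j\<in>C. L j) - S)" using \<open>finite S\<close> by (rule Diff_infinite_finite[rotated])
  then have "(\<Inter>j\<in>C. L j) - S \<noteq> {}" by (rule infinite_imp_nonempty)
  then have "\<exists>z. z \<in> (\<Inter>j\<in>C. L j) - S" by blast
  then have "threshold_generator L m (map x [0..<t]) \<in> (\<Inter>j\<in>C. L j) - S"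
    unfolding threshold_generator_def set_prefix C_def by (rule someI_ex)
  then show "threshold_generator L m (map x [0..<t]) \<in> L i - seen x t"
    using \<open>i \<in> C\<close> S_def by blast
qed

section \<open>Properties of the Procedure\<close>

lemma mchk_candidates_finite:
  "finite {card (\<Inter>k\<in>D. L k) | D. D \<subseteq> set (take (Suc p) ord) \<and> ord ! p \<in> D \<and> finite (\<Inter>k\<in>D. L k)}"
proof (rule finite_subset)
  show "{card (\<Inter>k\<in>D. L k) | D. D \<subseteq> set (take (Suc p) ord) \<and> ord ! p \<in> D \<and> finite (\<Inter>k\<in>D. L k)}
     \<subseteq> (\<lambda>D. card (\<Inter>k\<in>D. L k)) ` Pow (set (take (Suc p) ord))" by auto
qed simp

lemma card_Inter_le_mchk:
  assumes "D \<subseteq> set (take (Suc p) ord)" "ord ! p \<in> D" "finite (\<Inter>k\<in>D. L k)"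
  shows "card (\<Inter>k\<in>D. L k) \<le> mchk L ord p"
  unfolding mchk_def by (rule Max_ge) (simp add: mchk_candidates_finite, use assms in blast)

lemma mchk_mono:
  assumes "set (take (Suc p) ord) \<subseteq> set (take (Suc q) ord')" "ord ! p = ord' ! q"
  shows "mchk L ord p \<le> mchk L ord' q"
  unfolding mchk_def by (rule Max_mono) (use assms in \<open>auto simp: mchk_candidates_finite\<close>)

lemma mchk_attained:
  assumes "mchk L ord p \<noteq> 0"
  obtains D where "D \<subseteq> set (take (Suc p) ord)" "ord ! p \<in> D" "finite (\<Inter>k\<in>D. L k)"
    "card (\<Inter>k\<in>D. L k) = mchk L ord p"
proof -
  let ?S = "{card (\<Inter>k\<in>D. L k) | D. D \<subseteq> set (take (Suc p) ord) \<and> ord ! p \<in> D \<and> finite (\<Inter>k\<in>D. L k)}"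
  have "Max (insert 0 ?S) \<in> insert 0 ?S" by (rule Max_in) (simp_all add: mchk_candidates_finite)
  then have "mchk L ord p \<in> ?S" using assms unfolding mchk_def by auto
  then obtain D where "mchk L ord p = card (\<Inter>k\<in>D. L k)" "D \<subseteq> set (take (Suc p) ord)"
    "ord ! p \<in> D" "finite (\<Inter>k\<in>D. L k)"
    by blast
  then show ?thesis by (intro that) simp_all
qed

lemma ins_loop_cases:
  assumes "ins_loop L ms (A @ a # k # B) (Suc (length A)) = (ord', m)"
  obtains (stop) "ms a < mchk L (A @ a # k # B) (Suc (length A))"
      "ord' = A @ a # k # B" "m = mchk L (A @ a # k # B) (Suc (length A))"
    | (swap) "mchk L (A @ a # k # B) (Suc (length A)) \<le> ms a"
      "ins_loop L ms (A @ k # a # B) (length A) = (ord', m)"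
proof -
  have "swap_adj (A @ a # k # B) (length A) = A @ k # a # B"
    by (simp add: swap_adj_def list_update_append nth_append)
  then show ?thesis using assms that by (auto simp: Let_def nth_append split: if_splits)
qed

lemma ins_loop_inserts_sorted:
  assumes "ins_loop L ms (A @ k # B) (length A) = (ord', m)"
    and "sorted (map ms (A @ B))" "\<forall>b\<in>set B. mchk L (A @ k # B) (length A) \<le> ms b"
  shows "\<exists>A' B'. ord' = A' @ k # B' \<and> A' @ B' = A @ B \<and> (\<forall>a\<in>set A'. ms a \<le> m) \<and> (\<forall>b\<in>set B'. m \<le> ms b)"
  using assms
proof (induction A arbitrary: B rule: rev_induct)
  case Nil
  then show ?case by (intro exI[of _ "[]"] exI[of _ B]) auto
next
  case (snoc a A)
  let ?m0 = "mchk L (A @ a # k # B) (Suc (length A))"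
  have "ins_loop L ms (A @ a # k # B) (Suc (length A)) = (ord', m)" using snoc.prems(1) by simp
  then show ?case
  proof (cases rule: ins_loop_cases)
    case stop
    have "\<forall>x\<in>set A. ms x \<le> ms a" using snoc.prems(2) by (simp add: sorted_append)
    then show ?thesis using stop snoc.prems(3) by (intro exI[of _ "A @ [a]"] exI[of _ B]) auto
  next
    case swap
    \<comment> \<open>m_chk only decreases as the new entry moves forward, so it stays below the m* of passed entries.\<close>
    have "mchk L (A @ k # a # B) (length A) \<le> ?m0" by (rule mchk_mono) (auto simp: nth_append)
    then have "\<forall>b\<in>set (a # B). mchk L (A @ k # a # B) (length A) \<le> ms b"
      using swap(1) snoc.prems(3) by auto
    with snoc.IH[OF swap(2)] snoc.prems(2) show ?thesis by auto
  qed
qed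

lemma ins_loop_covers:
  assumes "ins_loop L ms (A @ k # B) (length A) = (ord', m)"
    and "D \<subseteq> insert k (set A)" "k \<in> D" "finite (\<Inter>j\<in>D. L j)" "infinite (L k)"
  shows "card (\<Inter>j\<in>D. L j) \<le> m \<or> (\<exists>j\<in>D \<inter> set A. card (\<Inter>j\<in>D. L j) \<le> ms j)"
  using assms
proof (induction A arbitrary: B rule: rev_induct)
  case Nil
  then have "D = {k}" by auto
  then show ?case using Nil by auto
next
  case (snoc a A)
  have le_mchk: "card (\<Inter>j\<in>D. L j) \<le> mchk L (A @ a # k # B) (Suc (length A))"
    by (rule card_Inter_le_mchk) (use snoc.prems in \<open>auto simp: nth_append\<close>)
  have "ins_loop L ms (A @ a # k # B) (Suc (length A)) = (ord', m)" using snoc.prems(1) by simp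
  then show ?case
  proof (cases rule: ins_loop_cases)
    case stop
    then show ?thesis using le_mchk by simp
  next
    case swap
    show ?thesis
    proof (cases "a \<in> D")
      case True
      then show ?thesis using swap(1) le_mchk by auto
    next
      case False
      then have "D \<subseteq> insert k (set A)" using snoc.prems(2) by auto
      with snoc.IH[OF swap(2)] snoc.prems(3-5) show ?thesis by auto
    qed
  qed
qed

lemma ins_loop_witness:
  assumes "ins_loop L ms (A @ k # B) (length A) = (ord', m)"
    and "sorted (map ms A)" "infinite (L k)" "m \<noteq> 0"
  shows "\<exists>D. k \<in> D \<and> D \<subseteq> insert k (set A \<union> set B) \<and> finite (\<Inter>j\<in>D. L j)
           \<and> card (\<Inter>j\<in>D. L j) = m \<and> (\<forall>j\<in>D - {k}. ms j < m)"
  using assms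
proof (induction A arbitrary: B rule: rev_induct)
  case Nil
  then have "mchk L (k # B) 0 \<noteq> 0" by auto
  then obtain D where "D \<subseteq> set (take (Suc 0) (k # B))" "(k # B) ! 0 \<in> D" "finite (\<Inter>j\<in>D. L j)"
    "card (\<Inter>j\<in>D. L j) = mchk L (k # B) 0"
    by (rule mchk_attained)
  then have "D = {k}" by auto
  with \<open>finite (\<Inter>j\<in>D. L j)\<close> Nil show ?case by simp
next
  case (snoc a A)
  let ?ord = "A @ a # k # B"
  have "ins_loop L ms ?ord (Suc (length A)) = (ord', m)" using snoc.prems(1) by simp
  then show ?case
  proof (cases rule: ins_loop_cases)
    case stop
    then have "mchk L ?ord (Suc (length A)) \<noteq> 0" using snoc.prems(4) by simp
    then obtain D where D: "D \<subseteq> set (take (Suc (Suc (length A))) ?ord)" "?ord ! Suc (length A) \<in> D"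
      "finite (\<Inter>j\<in>D. L j)" "card (\<Inter>j\<in>D. L j) = mchk L ?ord (Suc (length A))"
      by (rule mchk_attained)
    then have D_sub: "D \<subseteq> insert k (insert a (set A))" and "k \<in> D" by (auto simp: nth_append)
    have "ms j \<le> ms a" if "j \<in> set A" for j
      using snoc.prems(2) that by (simp add: sorted_append)
    then have "\<forall>j\<in>D - {k}. ms j < m" using D_sub stop(1,3) by fastforce
    with D \<open>k \<in> D\<close> D_sub stop(3) show ?thesis by auto
  next
    case swap
    with snoc.IH[OF swap(2)] snoc.prems(2-4) show ?thesis by (auto simp: sorted_append)
  qed
qed

lemma proc_invariant: "set (fst (proc L i)) = {..<i} \<and> sorted (map (snd (proc L i)) (fst (proc L i)))"
proof (induction i)
  case 0
  then show ?case by simp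
next
  case (Suc i)
  obtain ord ms where P: "proc L i = (ord, ms)" by fastforce
  obtain ord' m where Q: "ins_loop L ms (ord @ [i]) (length ord) = (ord', m)" by fastforce
  have step: "proc L (Suc i) = (ord', ms(i := m))" using P Q by simp
  have IH: "set ord = {..<i}" "sorted (map ms ord)" using Suc P by auto
  have "\<exists>A' B'. ord' = A' @ i # B' \<and> A' @ B' = ord @ [] \<and> (\<forall>a\<in>set A'. ms a \<le> m) \<and> (\<forall>b\<in>set B'. m \<le> ms b)"
    by (rule ins_loop_inserts_sorted) (use Q IH in simp_all)
  then obtain A' B' where AB: "ord' = A' @ i # B'" "A' @ B' = ord" "\<forall>a\<in>set A'. ms a \<le> m" "\<forall>b\<in>set B'. m \<le> ms b"
    by auto
  have AB_set: "set A' \<union> set B' = {..<i}" using AB(2) IH(1) by (metis set_append)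
  then have "map (ms(i := m)) ord' = map ms A' @ m # map ms B'" using AB(1) by auto
  also have "sorted \<dots>" using AB(3,4) IH(2) unfolding AB(2)[symmetric] by (auto simp: sorted_append)
  finally have "sorted (map (ms(i := m)) ord')" .
  moreover have "set ord' = {..<Suc i}" using AB(1) AB_set lessThan_Suc by auto
  ultimately show ?case unfolding step by (simp del: fun_upd_apply)
qed

lemma snd_proc_eq_mstar: "j < i \<Longrightarrow> snd (proc L i) j = mstar L j"
proof (induction i)
  case (Suc i)
  then show ?case by (cases "j = i") (auto simp: mstar_def split: prod.split)
qed simp

lemma mstar_eq_ins_loop:
  "proc L k = (ord, ms) \<Longrightarrow> ins_loop L ms (ord @ [k]) (length ord) = (ord', m) \<Longrightarrow> mstar L k = m"
  by (simp add: mstar_def)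

lemma mstar_covers:
  assumes "\<And>i. infinite (L i)" "finite D" "D \<noteq> {}" "finite (\<Inter>j\<in>D. L j)"
  shows "\<exists>j\<in>D. card (\<Inter>j\<in>D. L j) \<le> mstar L j"
proof -
  define k where "k = Max D"
  have "k \<in> D" "D \<subseteq> {..k}" using assms(2,3) by (auto simp: k_def)
  obtain ord ms where P: "proc L k = (ord, ms)" by fastforce
  obtain ord' m where Q: "ins_loop L ms (ord @ [k]) (length ord) = (ord', m)" by fastforce
  have ord: "set ord = {..<k}" using proc_invariant[of L k] P by simp
  then have "D \<subseteq> insert k (set ord)" using \<open>D \<subseteq> {..k}\<close> by auto
  with ins_loop_covers[of L ms ord k "[]"] Q \<open>k \<in> D\<close> assms(1,4)
  have "card (\<Inter>j\<in>D. L j) \<le> m \<or> (\<exists>j\<in>D \<inter> set ord. card (\<Inter>j\<in>D. L j) \<le> ms j)" by auto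
  moreover have "ms j = mstar L j" if "j \<in> set ord" for j
    using snd_proc_eq_mstar[of j k L] that ord P by simp
  ultimately show ?thesis using mstar_eq_ins_loop[OF P Q] \<open>k \<in> D\<close> by auto
qed

lemma mstar_witness:
  assumes "\<And>i. infinite (L i)" "mstar L i \<noteq> 0"
  obtains D where "i \<in> D" "finite (\<Inter>j\<in>D. L j)" "card (\<Inter>j\<in>D. L j) = mstar L i"
    "\<forall>j\<in>D - {i}. mstar L j < mstar L i"
proof -
  obtain ord ms where P: "proc L i = (ord, ms)" by fastforce
  obtain ord' m where Q: "ins_loop L ms (ord @ [i]) (length ord) = (ord', m)" by fastforce
  have ord: "set ord = {..<i}" "sorted (map ms ord)" using proc_invariant[of L i] P by auto
  have m: "mstar L i = m" by (rule mstar_eq_ins_loop[OF P Q])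
  obtain D where D: "i \<in> D" "D \<subseteq> insert i (set ord)" "finite (\<Inter>j\<in>D. L j)"
    "card (\<Inter>j\<in>D. L j) = m" "\<forall>j\<in>D - {i}. ms j < m"
    using ins_loop_witness[of L ms ord i "[]"] Q ord(2) assms m by auto
  have "ms j = mstar L j" if "j \<in> D - {i}" for j
    using snd_proc_eq_mstar[of j i L] that D(2) ord(1) P by auto
  with D m show ?thesis using that by auto
qed

theorem mainTheorem3:
  fixes L :: "nat \<Rightarrow> 'u set"
  assumes "countable (UNIV :: 'u set)" and "infinite (UNIV :: 'u set)"
    and "\<And>i. infinite (L i)"
    and "\<And>t::nat. finite {j. mstar L j + 1 \<le> t}"
  shows "\<exists>(G::'u algorithm) T. nonunif_generates_with G L T \<and> pareto_optimal L T"
proof -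
  \<comment> \<open>Time 0 instead of 1 when m* = 0: both are reached at once, but only 0 cannot be undercut.\<close>
  define T where "T i = (if mstar L i = 0 then 0 else Suc (mstar L i))" for i
  define G where "G = threshold_generator L (mstar L)"
  have good: "gen_good G (L i) (Suc (mstar L i))" for i
    unfolding G_def
  proof (rule gen_good_threshold_generator)
    show "finite {j. mstar L j < t}" for t using assms(4)[of t] by (simp add: Suc_le_eq)
  qed (use mstar_covers assms(3) in blast)
  have "gen_good G (L i) (T i)" for i
  proof (cases "mstar L i = 0")
    case True
    then show ?thesis using good[of i] by (simp add: T_def gen_good_Suc_0_imp_0)
  qed (simp add: T_def good)
  then have "nonunif_generates_with G L T" by (simp add: nonunif_generates_with_def)
  moreover have "pareto_optimal L T"
  proof (rule pareto_optimal_if_tight)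
    show "countable (L i)" for i using assms(1) by (rule countable_subset[OF subset_UNIV])
    fix i assume "T i \<noteq> 0"
    then have "mstar L i \<noteq> 0" by (simp add: T_def split: if_splits)
    then obtain D where "i \<in> D" "finite (\<Inter>j\<in>D. L j)" "card (\<Inter>j\<in>D. L j) = mstar L i"
      "\<forall>j\<in>D - {i}. mstar L j < mstar L i"
      using mstar_witness assms(3) by blast
    then show "\<exists>D. i \<in> D \<and> finite (\<Inter>j\<in>D. L j) \<and> 0 < card (\<Inter>j\<in>D. L j)
      \<and> T i = Suc (card (\<Inter>j\<in>D. L j)) \<and> (\<forall>j\<in>D - {i}. T j \<le> card (\<Inter>j\<in>D. L j))"
      using \<open>mstar L i \<noteq> 0\<close> by (intro exI[of _ D]) (auto simp: T_def Suc_le_eq)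
  qed (use assms(3) in blast)
  ultimately show ?thesis by blast
qed

end
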